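(* Let $K\ge2$ and $T^K:=\{v\in\mathbb{R}^K:\|v\|_1=1,\ \sum_{k=1}^Kv_k=0\}$. For $\beta>0$ let $\|v\|_\beta=\left(\sum_{k=1}^K|v_k|^\beta\right)^{1/\beta}$. (1) If $0<\beta<1$, then $\min_{v\in T^K}\|v\|_\beta=2^{\frac1\beta-1}$, and the minimum is attained at the vector $v$ with $v_1=-\tfrac12$, $v_2=\tfrac12$ and $v_k=0$ for $k\ge3$. (2) If $\beta>1$, then \[ \min_{v\in T^K}\|v\|_\beta=\frac12\left(\left\lfloor\tfrac K2\right\rfloor^{1-\beta}+\left\lceil\tfrac K2\right\rceil^{1-\beta}\right)^{1/\beta}, \] and the minimum is attained at the vector $v$ with $v_k=\frac{1}{2\lfloor K/2\rfloor}$ for $1\le k\le\lfloor K/2\rfloor$ and $v_k=-\frac{1}{2\lceil K/2\rceil}$ for $\lfloor K/2\rfloor<k\le K$.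
   Context: $\|v\|_1=\sum_k|v_k|$. *)

theory Defs
  imports Complex_Main
begin

text \<open>Vectors in R^K are represented as functions nat => real supported on {1..K}.\<close>

definition simplexT :: "nat \<Rightarrow> (nat \<Rightarrow> real) set" where
  "simplexT K = {v. (\<forall>k. k \<notin> {1..K} \<longrightarrow> v k = 0) \<and>
                   (\<Sum>k=1..K. \<bar>v k\<bar>) = 1 \<and> (\<Sum>k=1..K. v k) = 0}"

definition bnorm :: "real \<Rightarrow> nat \<Rightarrow> (nat \<Rightarrow> real) \<Rightarrow> real" where
  "bnorm \<beta> K v = (\<Sum>k=1..K. \<bar>v k\<bar> powr \<beta>) powr (1 / \<beta>)"

end

theory Submission
  imports Defs "HOL-Analysis.Analysis"
begin

text \<open>
  For v in T^K the positive and the negative coordinates each carry l1-mass 1/2. If beta < 1,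
  every |v k| is therefore at most 1/2, and on [0, 1/2] the concave map t powr beta lies above
  the chord 2 powr (1 - beta) * t; summing gives the bound. If beta > 1, the power-mean
  inequality shows that n coordinates of total mass 1/2 contribute at least
  (1/2) powr beta * n powr (1 - beta). Since n powr (1 - beta) is decreasing and convex in n and
  the numbers of positive and negative coordinates add up to at most K, the total is smallest
  for the balanced split into K div 2 and (K + 1) div 2 coordinates, which the witness attains.
\<close>

lemma convex_on_powr_nonpos:
  assumes "r \<le> 0"
  shows "convex_on {0<..} (\<lambda>x::real. x powr r)"
proof (rule f''_ge0_imp_convex)
  fix x :: real assume x: "x \<in> {0<..}"
  show "DERIV (\<lambda>x. x powr r) x :> r * x powr (r - 1)"
    using x by (auto intro!: derivative_eq_intros)
  show "DERIV (\<lambda>x. r * x powr (r - 1)) x :> r * ((r - 1) * x powr (r - 2))"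
    using x by (auto intro!: derivative_eq_intros simp: diff_diff_eq)
  show "0 \<le> r * ((r - 1) * x powr (r - 2))"
    using assms by (intro mult_nonpos_nonpos mult_nonpos_nonneg) auto
qed simp

lemma convex_on_pair_le_spread:
  fixes f :: "real \<Rightarrow> real"
  assumes f: "convex_on {p..q} f" and a: "a \<in> {p..q}" and b: "b \<in> {p..q}"
    and ab: "a + b = p + q"
  shows "f a + f b \<le> f p + f q"
proof -
  define s where "s = (f q - f p) / (q - p)"
  have "f a \<le> s * (a - p) + f p" "f b \<le> s * (b - p) + f p"
    unfolding s_def using convex_onD_Icc'[OF f a] convex_onD_Icc'[OF f b] by simp_all
  moreover have "s * (a - p) + s * (b - p) = s * (q - p)"
    using ab by (simp flip: distrib_left)
  moreover have "s * (q - p) = f q - f p"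
    by (cases "p = q") (simp_all add: s_def)
  ultimately show ?thesis by linarith
qed

lemma powr_balanced_split_le:
  fixes p q K :: nat and r :: real
  assumes "r \<le> 0" "0 < p" "0 < q" "p + q \<le> K"
  shows "real (K div 2) powr r + real ((K + 1) div 2) powr r \<le> real p powr r + real q powr r"
  using assms
proof (induction p q rule: linorder_wlog)
  case (le p q)
  have halves: "K div 2 + (K + 1) div 2 = K" "p \<le> K div 2" "K div 2 \<le> (K + 1) div 2"
    "(K + 1) div 2 \<le> K - p"
    using le by auto
  have "real (K div 2) powr r + real ((K + 1) div 2) powr r \<le> real p powr r + real (K - p) powr r"
  proof (rule convex_on_pair_le_spread[where f = "\<lambda>x. x powr r"])
    show "convex_on {real p..real (K - p)} (\<lambda>x. x powr r)"
      by (rule convex_on_subset[OF convex_on_powr_nonpos[OF le.prems(1)]]) (use le in auto)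
    show "real (K div 2) + real ((K + 1) div 2) = real p + real (K - p)"
      using halves le by (simp flip: of_nat_add)
  qed (use halves in auto)
  also have "real (K - p) powr r \<le> real q powr r"
    by (rule powr_mono2') (use le in auto)
  finally show ?case by simp
next
  case (sym p q)
  then show ?case by (simp add: add.commute)
qed

lemma mult_powr_divide:
  fixes x s \<beta> :: real
  assumes "0 < x" "0 \<le> s"
  shows "x * (s / x) powr \<beta> = s powr \<beta> * x powr (1 - \<beta>)"
  using assms by (simp add: powr_divide powr_diff)

lemma sum_powr_ge_power_mean:
  fixes x :: "'a \<Rightarrow> real"
  assumes "finite S" "S \<noteq> {}" "1 \<le> \<beta>" "\<And>i. i \<in> S \<Longrightarrow> 0 < x i"
  shows "(\<Sum>i\<in>S. x i) powr \<beta> * real (card S) powr (1 - \<beta>) \<le> (\<Sum>i\<in>S. x i powr \<beta>)"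
proof -
  define n where "n = real (card S)"
  have n: "0 < n" using assms by (simp add: n_def card_gt_0_iff)
  have "((\<Sum>i\<in>S. x i) / n) powr \<beta> \<le> (\<Sum>i\<in>S. x i powr \<beta>) / n"
    using convex_on_sum[OF assms(1,2) powr_convex[OF assms(3)], of "\<lambda>_. 1 / n" x] assms n
    by (simp add: n_def sum_divide_distrib)
  then have "n * ((\<Sum>i\<in>S. x i) / n) powr \<beta> \<le> (\<Sum>i\<in>S. x i powr \<beta>)"
    using n by (simp add: field_simps)
  then show ?thesis
    using mult_powr_divide[OF n sum_nonneg, of S x \<beta>] assms(4) by (simp add: n_def less_imp_le)
qed

lemma powr_ge_chord:
  fixes x c \<beta> :: real
  assumes "\<beta> \<le> 1" "0 \<le> x" "x \<le> c"
  shows "c powr (\<beta> - 1) * x \<le> x powr \<beta>"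
proof (cases "x = 0")
  case False
  then have "c powr (\<beta> - 1) \<le> x powr (\<beta> - 1)"
    using assms by (intro powr_mono2') auto
  then show ?thesis
    using False assms by (simp add: powr_diff field_simps)
qed simp

lemma sum_abs_powr_split:
  fixes v :: "'a \<Rightarrow> real"
  assumes "finite A"
  shows "(\<Sum>k\<in>A. \<bar>v k\<bar> powr \<beta>) =
    (\<Sum>k\<in>{k\<in>A. 0 < v k}. v k powr \<beta>) + (\<Sum>k\<in>{k\<in>A. v k < 0}. (- v k) powr \<beta>)"
  using assms by (simp add: sum.inter_filter flip: sum.distrib) (rule sum.cong, auto)

lemma simplexT_sum_pos_part:
  assumes "v \<in> simplexT K"
  shows "(\<Sum>k\<in>{k\<in>{1..K}. 0 < v k}. v k) = 1 / 2"
proof -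
  have "(\<Sum>k\<in>{k\<in>{1..K}. 0 < v k}. v k) = (\<Sum>k=1..K. (\<bar>v k\<bar> + v k) / 2)"
    unfolding sum.inter_filter[OF finite_atLeastAtMost] by (rule sum.cong) auto
  also have "\<dots> = 1 / 2"
    using assms by (simp add: simplexT_def sum.distrib flip: sum_divide_distrib)
  finally show ?thesis .
qed

lemma simplexT_sum_neg_part:
  assumes "v \<in> simplexT K"
  shows "(\<Sum>k\<in>{k\<in>{1..K}. v k < 0}. - v k) = 1 / 2"
proof -
  have "(\<Sum>k\<in>{k\<in>{1..K}. v k < 0}. - v k) = (\<Sum>k=1..K. (\<bar>v k\<bar> - v k) / 2)"
    unfolding sum.inter_filter[OF finite_atLeastAtMost] by (rule sum.cong) auto
  also have "\<dots> = 1 / 2"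
    using assms by (simp add: simplexT_def sum_subtractf flip: sum_divide_distrib)
  finally show ?thesis .
qed

lemma simplexT_abs_le_half:
  assumes "v \<in> simplexT K"
  shows "\<bar>v k\<bar> \<le> 1 / 2"
proof (cases "k \<in> {1..K}")
  case True
  consider "0 < v k" | "v k < 0" | "v k = 0" by linarith
  then show ?thesis
  proof cases
    case 1
    then have "v k \<le> (\<Sum>j\<in>{j\<in>{1..K}. 0 < v j}. v j)"
      using True by (intro member_le_sum) auto
    then show ?thesis using 1 simplexT_sum_pos_part[OF assms] by simp
  next
    case 2
    then have "- v k \<le> (\<Sum>j\<in>{j\<in>{1..K}. v j < 0}. - v j)"
      using True by (intro member_le_sum) auto
    then show ?thesis using 2 simplexT_sum_neg_part[OF assms] by simp
  qed simp
next
  case False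
  then show ?thesis using assms by (simp add: simplexT_def)
qed

lemma simplexT_sum_abs_powr_ge_concave:
  assumes "\<beta> \<le> 1" "v \<in> simplexT K"
  shows "2 powr (1 - \<beta>) \<le> (\<Sum>k=1..K. \<bar>v k\<bar> powr \<beta>)"
proof -
  have "(1 / 2 :: real) powr (\<beta> - 1) = 2 powr (1 - \<beta>)"
    by (simp add: powr_divide powr_minus_divide[symmetric])
  then have "2 powr (1 - \<beta>) = (\<Sum>k=1..K. (1 / 2) powr (\<beta> - 1) * \<bar>v k\<bar>)"
    using assms(2) by (simp add: simplexT_def flip: sum_distrib_left)
  also have "\<dots> \<le> (\<Sum>k=1..K. \<bar>v k\<bar> powr \<beta>)"
    using assms simplexT_abs_le_half by (intro sum_mono powr_ge_chord) auto
  finally show ?thesis .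
qed

lemma simplexT_sum_abs_powr_ge_convex:
  assumes "1 < \<beta>" "v \<in> simplexT K"
  shows "(1 / 2) powr \<beta> * (real (K div 2) powr (1 - \<beta>) + real ((K + 1) div 2) powr (1 - \<beta>))
    \<le> (\<Sum>k=1..K. \<bar>v k\<bar> powr \<beta>)"
proof -
  let ?P = "{k\<in>{1..K}. 0 < v k}" and ?N = "{k\<in>{1..K}. v k < 0}"
  have "?P \<noteq> {}" "?N \<noteq> {}"
    using simplexT_sum_pos_part[OF assms(2)] simplexT_sum_neg_part[OF assms(2)]
    by (metis sum.empty zero_neq_numeral divide_eq_0_iff one_neq_zero)+
  have "(\<Sum>k\<in>?P. v k) powr \<beta> * real (card ?P) powr (1 - \<beta>) \<le> (\<Sum>k\<in>?P. v k powr \<beta>)"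
    by (rule sum_powr_ge_power_mean) (use \<open>?P \<noteq> {}\<close> assms(1) in auto)
  then have P: "(1 / 2) powr \<beta> * real (card ?P) powr (1 - \<beta>) \<le> (\<Sum>k\<in>?P. v k powr \<beta>)"
    by (simp only: simplexT_sum_pos_part[OF assms(2)])
  have "(\<Sum>k\<in>?N. - v k) powr \<beta> * real (card ?N) powr (1 - \<beta>) \<le> (\<Sum>k\<in>?N. (- v k) powr \<beta>)"
    by (rule sum_powr_ge_power_mean) (use \<open>?N \<noteq> {}\<close> assms(1) in auto)
  then have N: "(1 / 2) powr \<beta> * real (card ?N) powr (1 - \<beta>) \<le> (\<Sum>k\<in>?N. (- v k) powr \<beta>)"
    by (simp only: simplexT_sum_neg_part[OF assms(2)])
  have "card ?P + card ?N = card (?P \<union> ?N)"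
    by (rule card_Un_disjoint[symmetric]) auto
  also have "\<dots> \<le> card {1..K}"
    by (rule card_mono) auto
  finally have "card ?P + card ?N \<le> K" by simp
  then have "real (K div 2) powr (1 - \<beta>) + real ((K + 1) div 2) powr (1 - \<beta>)
      \<le> real (card ?P) powr (1 - \<beta>) + real (card ?N) powr (1 - \<beta>)"
    using \<open>?P \<noteq> {}\<close> \<open>?N \<noteq> {}\<close> assms(1)
    by (intro powr_balanced_split_le) (auto simp: card_gt_0_iff)
  then have "(1 / 2) powr \<beta> * (real (K div 2) powr (1 - \<beta>) + real ((K + 1) div 2) powr (1 - \<beta>))
      \<le> (1 / 2) powr \<beta> * real (card ?P) powr (1 - \<beta>) + (1 / 2) powr \<beta> * real (card ?N) powr (1 - \<beta>)"
    by (simp add: mult_left_mono flip: distrib_left)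
  also have "\<dots> \<le> (\<Sum>k=1..K. \<bar>v k\<bar> powr \<beta>)"
    using P N sum_abs_powr_split[of "{1..K}" v \<beta>] by simp
  finally show ?thesis .
qed

lemma bnorm_minimizer:
  assumes "0 < \<beta>" "(\<Sum>k=1..K. \<bar>w k\<bar> powr \<beta>) = m"
    and "\<And>v. v \<in> simplexT K \<Longrightarrow> m \<le> (\<Sum>k=1..K. \<bar>v k\<bar> powr \<beta>)"
  shows "bnorm \<beta> K w = m powr (1 / \<beta>)" "\<forall>v\<in>simplexT K. bnorm \<beta> K w \<le> bnorm \<beta> K v"
proof -
  show "bnorm \<beta> K w = m powr (1 / \<beta>)"
    using assms(2) by (simp add: bnorm_def)
  have "0 \<le> m"
    unfolding assms(2)[symmetric] by (intro sum_nonneg) simp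
  show "\<forall>v\<in>simplexT K. bnorm \<beta> K w \<le> bnorm \<beta> K v"
  proof
    fix v assume "v \<in> simplexT K"
    then have "m \<le> (\<Sum>k=1..K. \<bar>v k\<bar> powr \<beta>)" by (rule assms(3))
    then show "bnorm \<beta> K w \<le> bnorm \<beta> K v"
      unfolding bnorm_def assms(2) using \<open>0 \<le> m\<close> assms(1) by (intro powr_mono2) simp_all
  qed
qed

lemma bnorm_min_simplexT_concave:
  fixes K :: nat and \<beta> :: real
  assumes "2 \<le> K" "0 < \<beta>" "\<beta> < 1"
  defines "w \<equiv> (\<lambda>k. if k = 1 then -1/2 else if k = 2 then 1/2 else 0 :: real)"
  shows "w \<in> simplexT K \<and> bnorm \<beta> K w = 2 powr (1/\<beta> - 1) \<and>
    (\<forall>v\<in>simplexT K. bnorm \<beta> K w \<le> bnorm \<beta> K v)"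
proof -
  have sum_w: "(\<Sum>k=1..K. g (w k)) = g (-1/2) + g (1/2)" if "g 0 = 0" for g :: "real \<Rightarrow> real"
  proof -
    have "(\<Sum>k=1..K. g (w k)) = (\<Sum>k\<in>{1, 2}. g (w k))"
      using assms(1) that by (intro sum.mono_neutral_right) (auto simp: w_def)
    then show ?thesis by (simp add: w_def)
  qed
  have "w \<in> simplexT K"
    using sum_w[of abs] sum_w[of "\<lambda>x. x"] assms(1) by (simp add: simplexT_def w_def)
  moreover have m: "(\<Sum>k=1..K. \<bar>w k\<bar> powr \<beta>) = 2 powr (1 - \<beta>)"
    using sum_w[of "\<lambda>x. \<bar>x\<bar> powr \<beta>"] by (simp add: powr_divide powr_diff)
  moreover have "(2 powr (1 - \<beta>)) powr (1 / \<beta>) = 2 powr (1/\<beta> - 1)"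
    using assms(2) by (simp add: powr_powr field_simps)
  ultimately show ?thesis
    using bnorm_minimizer[OF assms(2) m simplexT_sum_abs_powr_ge_concave] assms(3) by simp
qed

lemma bnorm_min_simplexT_convex:
  fixes K :: nat and \<beta> :: real
  assumes "2 \<le> K" "1 < \<beta>"
  defines "w \<equiv> (\<lambda>k. if 1 \<le> k \<and> k \<le> K div 2 then 1 / (2 * real (K div 2))
                     else if K div 2 < k \<and> k \<le> K then - 1 / (2 * real ((K + 1) div 2))
                     else 0 :: real)"
  shows "w \<in> simplexT K \<and>
    bnorm \<beta> K w = 1/2 * (real (K div 2) powr (1 - \<beta>)
                        + real ((K + 1) div 2) powr (1 - \<beta>)) powr (1/\<beta>) \<and>
    (\<forall>v\<in>simplexT K. bnorm \<beta> K w \<le> bnorm \<beta> K v)"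
proof -
  define a c where "a = K div 2" and "c = (K + 1) div 2"
  have ac: "0 < a" "0 < c" "a \<le> K" "K - a = c" using assms(1) by (auto simp: a_def c_def)
  have sum_w: "(\<Sum>k=1..K. g (w k)) = real a * g (1 / (2 * real a)) + real c * g (- 1 / (2 * real c))"
    for g :: "real \<Rightarrow> real"
  proof -
    have "{1..K} = {1..a} \<union> {a<..K}" using ac by auto
    then have "(\<Sum>k=1..K. g (w k)) = (\<Sum>k=1..a. g (w k)) + (\<Sum>k\<in>{a<..K}. g (w k))"
      by (simp only:) (rule sum.union_disjoint, auto)
    also have "\<dots> = (\<Sum>k=1..a. g (1 / (2 * real a))) + (\<Sum>k\<in>{a<..K}. g (- 1 / (2 * real c)))"
      by (intro arg_cong2[where f = "(+)"] sum.cong) (auto simp: w_def a_def c_def)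
    finally show ?thesis using ac by simp
  qed
  let ?X = "real a powr (1 - \<beta>) + real c powr (1 - \<beta>)"
  have "(\<Sum>k=1..K. \<bar>w k\<bar>) = 1" "(\<Sum>k=1..K. w k) = 0"
    using sum_w[of abs] sum_w[of "\<lambda>x. x"] ac by simp_all
  moreover have "\<forall>k. k \<notin> {1..K} \<longrightarrow> w k = 0" by (auto simp: w_def)
  ultimately have "w \<in> simplexT K" by (simp add: simplexT_def)
  moreover have m: "(\<Sum>k=1..K. \<bar>w k\<bar> powr \<beta>) = (1 / 2) powr \<beta> * ?X"
    using sum_w[of "\<lambda>x. \<bar>x\<bar> powr \<beta>"] mult_powr_divide[of a "1 / 2" \<beta>]
      mult_powr_divide[of c "1 / 2" \<beta>] ac
    by (simp add: distrib_left)
  moreover have "((1 / 2) powr \<beta> * ?X) powr (1 / \<beta>) = 1 / 2 * ?X powr (1 / \<beta>)"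
    using assms(2) by (simp add: powr_mult powr_powr)
  moreover note simplexT_sum_abs_powr_ge_convex[OF assms(2), where K = K, folded a_def c_def]
  ultimately show ?thesis
    using bnorm_minimizer[OF _ m] assms(2) unfolding a_def c_def by simp
qed

theorem lemma2:
  fixes K :: nat and \<beta> :: real
  assumes "K \<ge> 2"
  shows "(0 < \<beta> \<and> \<beta> < 1 \<longrightarrow>
           (let w = (\<lambda>k. if k = 1 then -1/2 else if k = 2 then 1/2 else 0 :: real)
            in w \<in> simplexT K \<and> bnorm \<beta> K w = 2 powr (1/\<beta> - 1) \<and>
               (\<forall>v \<in> simplexT K. bnorm \<beta> K w \<le> bnorm \<beta> K v)))
       \<and> (\<beta> > 1 \<longrightarrow>
           (let w = (\<lambda>k. if 1 \<le> k \<and> k \<le> K div 2 then 1 / (2 * real (K div 2))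
                         else if K div 2 < k \<and> k \<le> K then - 1 / (2 * real ((K + 1) div 2))
                         else 0 :: real)
            in w \<in> simplexT K \<and>
               bnorm \<beta> K w = 1/2 * (real (K div 2) powr (1 - \<beta>)
                                   + real ((K + 1) div 2) powr (1 - \<beta>)) powr (1/\<beta>) \<and>
               (\<forall>v \<in> simplexT K. bnorm \<beta> K w \<le> bnorm \<beta> K v)))"
  unfolding Let_def
  using bnorm_min_simplexT_concave[OF assms] bnorm_min_simplexT_convex[OF assms] by blast

end
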